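(* Every W-state graph is $2$-connected.
   Context: Graphs may have parallel edges but no loops. A half-edge $2$-colouring $c$ of $G$ assigns to each pair $(e,w)$ with $w$ an endpoint of edge $e$ a colour in $\{0,1\}$ (0 = blue, 1 = red). An edge $e=uv$ is bichromatic if $c(e,u)\neq c(e,v)$ and monochromatic otherwise; standing convention: monochromatic edges are blue at both ends. A graph is matching-covered if every edge lies in some perfect matching. A W-state graph is a half-edge $2$-coloured matching-covered graph $(G,c)$ in which every perfect matching contains exactly one bichromatic edge, and every vertex $v$ is incident with an edge $e$ with $c(e,v)=1$. *)

theory Defs
  imports Main
begin

text \<open>A finite loopless multigraph: vertex set V, edge set E (edge identities, so
parallel edges are allowed), and an endpoint map ends, each edge having exactly
two distinct endpoints in V.\<close>
definition multigraph :: "'v set \<Rightarrow> 'e set \<Rightarrow> ('e \<Rightarrow> 'v set) \<Rightarrow> bool" where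
  "multigraph V E ends \<longleftrightarrow> finite V \<and> finite E \<and>
     (\<forall>e\<in>E. ends e \<subseteq> V \<and> card (ends e) = 2)"

definition perfect_matching :: "'v set \<Rightarrow> 'e set \<Rightarrow> ('e \<Rightarrow> 'v set) \<Rightarrow> 'e set \<Rightarrow> bool" where
  "perfect_matching V E ends M \<longleftrightarrow> M \<subseteq> E \<and> (\<forall>v\<in>V. \<exists>!e. e \<in> M \<and> v \<in> ends e)"

definition matching_covered :: "'v set \<Rightarrow> 'e set \<Rightarrow> ('e \<Rightarrow> 'v set) \<Rightarrow> bool" where
  "matching_covered V E ends \<longleftrightarrow> multigraph V E ends \<and>
     (\<forall>e\<in>E. \<exists>M. perfect_matching V E ends M \<and> e \<in> M)"

text \<open>Half-edge 2-colouring: c e w is the colour of the half-edge (e,w);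
True = 1 = red, False = 0 = blue.\<close>
definition bichromatic :: "('e \<Rightarrow> 'v set) \<Rightarrow> ('e \<Rightarrow> 'v \<Rightarrow> bool) \<Rightarrow> 'e \<Rightarrow> bool" where
  "bichromatic ends c e \<longleftrightarrow> (\<exists>u v. ends e = {u, v} \<and> c e u \<noteq> c e v)"

text \<open>W-state graph (including the standing convention that monochromatic edges
are blue at both ends, i.e. no edge is red at both ends).\<close>
definition W_state_graph :: "'v set \<Rightarrow> 'e set \<Rightarrow> ('e \<Rightarrow> 'v set) \<Rightarrow> ('e \<Rightarrow> 'v \<Rightarrow> bool) \<Rightarrow> bool" where
  "W_state_graph V E ends c \<longleftrightarrow>
     matching_covered V E ends \<and>
     (\<forall>e\<in>E. \<not> bichromatic ends c e \<longrightarrow> (\<forall>w\<in>ends e. \<not> c e w)) \<and>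
     (\<forall>M. perfect_matching V E ends M \<longrightarrow> card {e \<in> M. bichromatic ends c e} = 1) \<and>
     (\<forall>v\<in>V. \<exists>e\<in>E. v \<in> ends e \<and> c e v)"

definition adj_in :: "'e set \<Rightarrow> ('e \<Rightarrow> 'v set) \<Rightarrow> 'v set \<Rightarrow> 'v \<Rightarrow> 'v \<Rightarrow> bool" where
  "adj_in E ends S u v \<longleftrightarrow> u \<in> S \<and> v \<in> S \<and> (\<exists>e\<in>E. ends e = {u, v})"

definition connected_on :: "'e set \<Rightarrow> ('e \<Rightarrow> 'v set) \<Rightarrow> 'v set \<Rightarrow> bool" where
  "connected_on E ends S \<longleftrightarrow> S \<noteq> {} \<and> (\<forall>u\<in>S. \<forall>v\<in>S. (adj_in E ends S)\<^sup>*\<^sup>* u v)"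

definition two_connected :: "'v set \<Rightarrow> 'e set \<Rightarrow> ('e \<Rightarrow> 'v set) \<Rightarrow> bool" where
  "two_connected V E ends \<longleftrightarrow> card V \<ge> 2 \<and> connected_on E ends V \<and>
     (\<forall>x\<in>V. connected_on E ends (V - {x}))"

end

theory Submission
  imports Defs
begin

text \<open>Connectivity: if the vertices split into two nonempty parts with no edge between them,
take a red half-edge at a vertex of each part. Both edges are bichromatic, since no edge is
red at both ends. A perfect matching through the first edge, restricted to the first part,
together with one through the second edge, restricted to the second part, is a perfect
matching with two bichromatic edges.

No cut vertex (true for every connected matching-covered graph): if deleting x leaves a
component A and a nonempty rest B, connectivity gives edges g from x to A and f from x to B.
A perfect matching through f matches A within itself, and one through g matches
A \<union> {x} within itself, so both card A and card A + 1 would be even.\<close>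

lemma multigraph_ends_subset:
  assumes "multigraph V E ends" "e \<in> E"
  shows "ends e \<subseteq> V"
  using assms unfolding multigraph_def by auto

lemma multigraph_edge_at_vertexE:
  assumes "multigraph V E ends" "e \<in> E" "x \<in> ends e"
  obtains y where "ends e = {x, y}"
proof -
  have "card (ends e) = 2"
    using assms(1,2) unfolding multigraph_def by blast
  then obtain p q where "ends e = {p, q}"
    by (auto simp: card_2_iff)
  with assms(3) have "ends e = {x, q} \<or> ends e = {x, p}"
    by (auto simp: insert_commute)
  then show ?thesis
    using that by blast
qed

lemma perfect_matching_edge_unique:
  assumes "perfect_matching V E ends M" "v \<in> V"
    and "e \<in> M" "v \<in> ends e" "e' \<in> M" "v \<in> ends e'"
  shows "e = e'"
  using assms unfolding perfect_matching_def by blast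

lemma perfect_matching_subset:
  "perfect_matching V E ends M \<Longrightarrow> M \<subseteq> E"
  unfolding perfect_matching_def by blast

lemma perfect_matching_coverE:
  assumes "perfect_matching V E ends M" "v \<in> V"
  obtains e where "e \<in> M" "v \<in> ends e"
  using assms unfolding perfect_matching_def by blast

lemma connected_on_crossing_edge:
  assumes "connected_on E ends S" "A \<subseteq> S" "A \<noteq> {}" "A \<noteq> S"
  shows "\<exists>e\<in>E. ends e \<subseteq> S \<and> ends e \<inter> A \<noteq> {} \<and> \<not> ends e \<subseteq> A"
proof (rule ccontr)
  assume no_crossing: "\<not> ?thesis"
  obtain a b where "a \<in> A" "b \<in> S" "b \<notin> A"
    using assms(2-4) by blast
  then have "(adj_in E ends S)\<^sup>*\<^sup>* a b"
    using assms(1,2) unfolding connected_on_def by blast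
  then have "b \<in> A"
  proof (induction rule: rtranclp_induct)
    case (step y z)
    then obtain e where "e \<in> E" "ends e = {y, z}" "y \<in> S" "z \<in> S"
      unfolding adj_in_def by blast
    moreover from this have "ends e \<subseteq> S" "ends e \<inter> A \<noteq> {}"
      using step.IH by auto
    ultimately have "ends e \<subseteq> A"
      using no_crossing by blast
    then show ?case
      using \<open>ends e = {y, z}\<close> by simp
  qed (use \<open>a \<in> A\<close> in simp)
  with \<open>b \<notin> A\<close> show False ..
qed

lemma connected_onI_crossing_edges:
  assumes "multigraph V E ends" "S \<noteq> {}"
    and crossing: "\<And>A. A \<subseteq> S \<Longrightarrow> A \<noteq> {} \<Longrightarrow> A \<noteq> S \<Longrightarrow>
                     \<exists>e\<in>E. ends e \<subseteq> S \<and> ends e \<inter> A \<noteq> {} \<and> \<not> ends e \<subseteq> A"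
  shows "connected_on E ends S"
  unfolding connected_on_def
proof (intro conjI ballI \<open>S \<noteq> {}\<close>)
  fix u v assume "u \<in> S" "v \<in> S"
  define A where "A = {w \<in> S. (adj_in E ends S)\<^sup>*\<^sup>* u w}"
  have "A = S"
  proof (rule ccontr)
    assume "A \<noteq> S"
    moreover have "u \<in> A"
      using \<open>u \<in> S\<close> unfolding A_def by simp
    ultimately obtain e where e: "e \<in> E" "ends e \<subseteq> S" "ends e \<inter> A \<noteq> {}" "\<not> ends e \<subseteq> A"
      using crossing[of A] unfolding A_def by blast
    obtain p where "p \<in> ends e" "p \<in> A"
      using e(3) by blast
    then obtain q where pq: "ends e = {p, q}" "p \<in> A"
      using multigraph_edge_at_vertexE[OF assms(1) \<open>e \<in> E\<close>] by blast
    with e(4) have "q \<notin> A"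
      by simp
    have "adj_in E ends S p q"
      unfolding adj_in_def using e(1,2) pq(1) by auto
    then have "q \<in> A"
      using pq(2) e(2) pq(1) unfolding A_def by (auto intro: rtranclp.rtrancl_into_rtrancl)
    with \<open>q \<notin> A\<close> show False ..
  qed
  then show "(adj_in E ends S)\<^sup>*\<^sup>* u v"
    using \<open>v \<in> S\<close> unfolding A_def by blast
qed

lemma perfect_matching_even_card:
  assumes mg: "multigraph V E ends" and M: "perfect_matching V E ends M"
    and "S \<subseteq> V"
    and closed: "\<And>e. e \<in> M \<Longrightarrow> ends e \<inter> S \<noteq> {} \<Longrightarrow> ends e \<subseteq> S"
  shows "even (card S)"
proof -
  define F where "F = ends ` {e \<in> M. ends e \<inter> S \<noteq> {}}"
  have "M \<subseteq> E"
    using perfect_matching_subset[OF M] .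
  then have "finite F"
    using mg unfolding F_def multigraph_def by (auto intro: finite_subset)
  have card_two: "card X = 2" if "X \<in> F" for X
    using that \<open>M \<subseteq> E\<close> mg unfolding F_def multigraph_def by auto
  have "\<Union>F = S"
  proof
    show "\<Union>F \<subseteq> S"
      unfolding F_def using closed by auto
    show "S \<subseteq> \<Union>F"
    proof
      fix s assume "s \<in> S"
      then obtain e where "e \<in> M" "s \<in> ends e"
        using perfect_matching_coverE[OF M] \<open>S \<subseteq> V\<close> by blast
      then show "s \<in> \<Union>F"
        unfolding F_def using \<open>s \<in> S\<close> by blast
    qed
  qed
  have "pairwise disjnt F"
  proof (rule pairwiseI)
    fix X Y assume "X \<in> F" "Y \<in> F" "X \<noteq> Y"
    then obtain e e' where "e \<in> M" "e' \<in> M" "X = ends e" "Y = ends e'"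
      unfolding F_def by blast
    then show "disjnt X Y"
      using perfect_matching_edge_unique[OF M] multigraph_ends_subset[OF mg] \<open>M \<subseteq> E\<close> \<open>X \<noteq> Y\<close>
      unfolding disjnt_def by blast
  qed
  then have "card S = (\<Sum>X\<in>F. card X)"
    using card_Union_disjoint[of F] card_two \<open>\<Union>F = S\<close>
    by (simp add: card_ge_0_finite)
  also have "\<dots> = 2 * card F"
    using card_two by simp
  finally show ?thesis by simp
qed

lemma perfect_matching_glue:
  assumes mg: "multigraph V E ends"
    and M1: "perfect_matching V E ends M1" and M2: "perfect_matching V E ends M2"
    and closed: "\<And>e. e \<in> E \<Longrightarrow> ends e \<inter> A \<noteq> {} \<Longrightarrow> ends e \<subseteq> A"
  shows "perfect_matching V E ends ({e \<in> M1. ends e \<subseteq> A} \<union> {e \<in> M2. ends e \<inter> A = {}})"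
    (is "perfect_matching V E ends ?M")
  unfolding perfect_matching_def
proof (intro conjI ballI)
  have "M1 \<subseteq> E" "M2 \<subseteq> E"
    using perfect_matching_subset M1 M2 by blast+
  then show "?M \<subseteq> E" by blast
  fix w assume "w \<in> V"
  show "\<exists>!e. e \<in> ?M \<and> w \<in> ends e"
  proof (cases "w \<in> A")
    case True
    obtain e where "e \<in> M1" "w \<in> ends e"
      using perfect_matching_coverE[OF M1 \<open>w \<in> V\<close>] .
    moreover have "ends e \<subseteq> A"
      using closed \<open>M1 \<subseteq> E\<close> \<open>e \<in> M1\<close> \<open>w \<in> ends e\<close> True by blast
    ultimately show ?thesis
      using perfect_matching_edge_unique[OF M1 \<open>w \<in> V\<close>] True by blast
  next
    case False
    obtain e where "e \<in> M2" "w \<in> ends e"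
      using perfect_matching_coverE[OF M2 \<open>w \<in> V\<close>] .
    moreover have "ends e \<inter> A = {}"
      using closed \<open>M2 \<subseteq> E\<close> \<open>e \<in> M2\<close> \<open>w \<in> ends e\<close> False by blast
    ultimately show ?thesis
      using perfect_matching_edge_unique[OF M2 \<open>w \<in> V\<close>] False by blast
  qed
qed

lemma connected_on_edge_into:
  assumes mg: "multigraph V E ends" and con: "connected_on E ends V"
    and "x \<in> V" "T \<subseteq> V - {x}" "T \<noteq> {}"
    and closed: "\<And>e. e \<in> E \<Longrightarrow> x \<notin> ends e \<Longrightarrow> ends e \<inter> T \<noteq> {} \<Longrightarrow> ends e \<subseteq> T"
  obtains g where "g \<in> E" "x \<in> ends g" "ends g \<subseteq> insert x T"
proof -
  obtain g where g: "g \<in> E" "ends g \<inter> T \<noteq> {}" "\<not> ends g \<subseteq> T"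
    using connected_on_crossing_edge[OF con, of T] assms(3-5) by blast
  then have "x \<in> ends g"
    using closed by blast
  moreover obtain y where "ends g = {x, y}"
    using multigraph_edge_at_vertexE[OF mg \<open>g \<in> E\<close> \<open>x \<in> ends g\<close>] .
  ultimately show thesis
    using that[of g] g assms(4) by auto
qed

lemma perfect_matching_even_card_at_vertex:
  assumes mg: "multigraph V E ends" and M: "perfect_matching V E ends M"
    and "x \<in> V" "T \<subseteq> V" "h \<in> M" "x \<in> ends h" "ends h \<subseteq> T \<or> ends h \<inter> T = {}"
    and closed: "\<And>e. e \<in> E \<Longrightarrow> x \<notin> ends e \<Longrightarrow> ends e \<inter> T \<noteq> {} \<Longrightarrow> ends e \<subseteq> T"
  shows "even (card T)"
proof (rule perfect_matching_even_card[OF mg M \<open>T \<subseteq> V\<close>])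
  fix e assume "e \<in> M" "ends e \<inter> T \<noteq> {}"
  show "ends e \<subseteq> T"
  proof (cases "x \<in> ends e")
    case True
    then have "e = h"
      using perfect_matching_edge_unique[OF M \<open>x \<in> V\<close> \<open>e \<in> M\<close> _ \<open>h \<in> M\<close> \<open>x \<in> ends h\<close>] by blast
    then show ?thesis
      using assms(7) \<open>ends e \<inter> T \<noteq> {}\<close> by blast
  next
    case False
    moreover have "e \<in> E"
      using perfect_matching_subset[OF M] \<open>e \<in> M\<close> ..
    ultimately show ?thesis
      using closed \<open>ends e \<inter> T \<noteq> {}\<close> by blast
  qed
qed

lemma matching_covered_connected_on_Diff_vertex:
  assumes mc: "matching_covered V E ends" and con: "connected_on E ends V"
    and "x \<in> V" "V - {x} \<noteq> {}"
  shows "connected_on E ends (V - {x})"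
proof -
  have mg: "multigraph V E ends"
    using mc unfolding matching_covered_def by blast
  show ?thesis
  proof (rule connected_onI_crossing_edges[OF mg \<open>V - {x} \<noteq> {}\<close>])
    fix A assume A: "A \<subseteq> V - {x}" "A \<noteq> {}" "A \<noteq> V - {x}"
    show "\<exists>e\<in>E. ends e \<subseteq> V - {x} \<and> ends e \<inter> A \<noteq> {} \<and> \<not> ends e \<subseteq> A"
    proof (rule ccontr)
      assume "\<not> ?thesis"
      then have closed: "ends e \<subseteq> A" if "e \<in> E" "x \<notin> ends e" "ends e \<inter> A \<noteq> {}" for e
        using that multigraph_ends_subset[OF mg] by blast
      define B where "B = V - {x} - A"
      have closed_B: "ends e \<subseteq> B" if "e \<in> E" "x \<notin> ends e" "ends e \<inter> B \<noteq> {}" for e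
        using that closed multigraph_ends_subset[OF mg] unfolding B_def by blast
      obtain g where g: "g \<in> E" "x \<in> ends g" "ends g \<subseteq> insert x A"
        using connected_on_edge_into[OF mg con \<open>x \<in> V\<close> A(1,2) closed] .
      obtain f where f: "f \<in> E" "x \<in> ends f" "ends f \<subseteq> insert x B"
        using connected_on_edge_into[OF mg con \<open>x \<in> V\<close> _ _ closed_B] A unfolding B_def by blast
      obtain Mf Mg where Mf: "perfect_matching V E ends Mf" "f \<in> Mf"
        and Mg: "perfect_matching V E ends Mg" "g \<in> Mg"
        using mc f(1) g(1) unfolding matching_covered_def by blast
      have "ends f \<inter> A = {}"
        using f(3) A(1) unfolding B_def by blast
      then have even_A: "even (card A)"
        using perfect_matching_even_card_at_vertex[OF mg Mf(1) \<open>x \<in> V\<close> _ Mf(2) f(2) _ closed] A(1)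
        by blast
      have closed_insert: "ends e \<subseteq> insert x A"
        if "e \<in> E" "x \<notin> ends e" "ends e \<inter> insert x A \<noteq> {}" for e
        using closed[OF that(1,2)] that(2,3) by blast
      have even_insert: "even (card (insert x A))"
        using perfect_matching_even_card_at_vertex[OF mg Mg(1) \<open>x \<in> V\<close> _ Mg(2) g(2) _ closed_insert]
          A(1) g(3) \<open>x \<in> V\<close> by blast
      have "finite A" "x \<notin> A"
        using A(1) mg unfolding multigraph_def by (auto intro: finite_subset)
      with even_A even_insert show False
        by simp
    qed
  qed
qed

lemma W_state_graph_closed_set_trivial:
  assumes W: "W_state_graph V E ends c" and "A \<subseteq> V"
    and closed: "\<And>e. e \<in> E \<Longrightarrow> ends e \<inter> A \<noteq> {} \<Longrightarrow> ends e \<subseteq> A"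
  shows "A = {} \<or> A = V"
proof (rule ccontr)
  assume "\<not> ?thesis"
  then obtain u v where "u \<in> A" "v \<in> V" "v \<notin> A"
    using \<open>A \<subseteq> V\<close> by blast
  have mg: "multigraph V E ends"
    and covered: "\<And>e. e \<in> E \<Longrightarrow> \<exists>M. perfect_matching V E ends M \<and> e \<in> M"
    and red_bichromatic: "\<And>e w. e \<in> E \<Longrightarrow> w \<in> ends e \<Longrightarrow> c e w \<Longrightarrow> bichromatic ends c e"
    and one: "\<And>M. perfect_matching V E ends M \<Longrightarrow> card {e \<in> M. bichromatic ends c e} = 1"
    and red: "\<And>v. v \<in> V \<Longrightarrow> \<exists>e\<in>E. v \<in> ends e \<and> c e v"
    using W unfolding W_state_graph_def matching_covered_def by blast+
  obtain e1 where e1: "e1 \<in> E" "u \<in> ends e1" "c e1 u"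
    using red \<open>A \<subseteq> V\<close> \<open>u \<in> A\<close> by blast
  obtain e2 where e2: "e2 \<in> E" "v \<in> ends e2" "c e2 v"
    using red \<open>v \<in> V\<close> by blast
  have "ends e1 \<subseteq> A" "ends e2 \<inter> A = {}"
    using closed e1 e2 \<open>u \<in> A\<close> \<open>v \<notin> A\<close> by blast+
  obtain M1 M2 where M1: "perfect_matching V E ends M1" "e1 \<in> M1"
    and M2: "perfect_matching V E ends M2" "e2 \<in> M2"
    using covered e1(1) e2(1) by blast
  define M where "M = {e \<in> M1. ends e \<subseteq> A} \<union> {e \<in> M2. ends e \<inter> A = {}}"
  have M: "perfect_matching V E ends M"
    unfolding M_def using perfect_matching_glue[OF mg M1(1) M2(1) closed] .
  have "finite M"
    using perfect_matching_subset[OF M] mg unfolding multigraph_def by (auto intro: finite_subset)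
  then have "finite {e \<in> M. bichromatic ends c e}"
    by simp
  moreover have "{e1, e2} \<subseteq> {e \<in> M. bichromatic ends c e}"
    unfolding M_def using M1 M2 \<open>ends e1 \<subseteq> A\<close> \<open>ends e2 \<inter> A = {}\<close> red_bichromatic e1 e2
    by blast
  ultimately have "card {e1, e2} \<le> card {e \<in> M. bichromatic ends c e}"
    by (rule card_mono)
  moreover have "e1 \<noteq> e2"
    using \<open>ends e1 \<subseteq> A\<close> \<open>ends e2 \<inter> A = {}\<close> e1(2) \<open>u \<in> A\<close> by blast
  ultimately show False
    using one[OF M] by simp
qed

lemma W_state_graph_nonempty:
  assumes "W_state_graph V E ends c"
  shows "V \<noteq> {}"
proof
  assume "V = {}"
  then have "perfect_matching V E ends {}"
    unfolding perfect_matching_def by simp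
  then show False
    using assms unfolding W_state_graph_def by fastforce
qed

lemma W_state_graph_connected:
  assumes W: "W_state_graph V E ends c"
  shows "connected_on E ends V"
proof -
  have mg: "multigraph V E ends"
    using W unfolding W_state_graph_def matching_covered_def by blast
  show ?thesis
  proof (rule connected_onI_crossing_edges[OF mg W_state_graph_nonempty[OF W]])
    fix A assume A: "A \<subseteq> V" "A \<noteq> {}" "A \<noteq> V"
    show "\<exists>e\<in>E. ends e \<subseteq> V \<and> ends e \<inter> A \<noteq> {} \<and> \<not> ends e \<subseteq> A"
    proof (rule ccontr)
      assume "\<not> ?thesis"
      then have "\<And>e. e \<in> E \<Longrightarrow> ends e \<inter> A \<noteq> {} \<Longrightarrow> ends e \<subseteq> A"
        using multigraph_ends_subset[OF mg] by blast
      with W_state_graph_closed_set_trivial[OF W A(1)] A(2,3) show False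
        by blast
    qed
  qed
qed

lemma W_state_graph_card_ge_2:
  assumes "W_state_graph V E ends c"
  shows "card V \<ge> 2"
proof -
  obtain v where "v \<in> V"
    using W_state_graph_nonempty[OF assms] by blast
  then obtain e where "e \<in> E"
    using assms unfolding W_state_graph_def by blast
  then have "card (ends e) = 2" "ends e \<subseteq> V" "finite V"
    using assms unfolding W_state_graph_def matching_covered_def multigraph_def by auto
  then show ?thesis
    by (metis card_mono)
qed

theorem mainTheorem6:
  fixes V :: "'v set" and E :: "'e set" and ends :: "'e \<Rightarrow> 'v set"
    and c :: "'e \<Rightarrow> 'v \<Rightarrow> bool"
  assumes "W_state_graph V E ends c"
  shows "two_connected V E ends"
proof -
  have mc: "matching_covered V E ends"
    using assms unfolding W_state_graph_def by blast
  have con: "connected_on E ends V"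
    using W_state_graph_connected[OF assms] .
  have card: "card V \<ge> 2"
    using W_state_graph_card_ge_2[OF assms] .
  have "V - {x} \<noteq> {}" for x
  proof
    assume "V - {x} = {}"
    then have "card V \<le> card {x}"
      by (intro card_mono) auto
    with card show False by simp
  qed
  then show ?thesis
    unfolding two_connected_def
    using card con matching_covered_connected_on_Diff_vertex[OF mc con] by blast
qed

end
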